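(* Let $S$ be a monoid and let $A_S$ be a right $S$-act that is both noetherian and Rees artinian. Then for every $f\in\mathrm{End}(A_S)$ there exists $n\in\mathbb N$ such that $\ker f^n\oplus\mathcal K_{\mathrm{Im}f^n}=\nabla_A$, i.e. $\ker f^n\vee\mathcal K_{\mathrm{Im}f^n}=\nabla_A$ and $\ker f^n\cap\mathcal K_{\mathrm{Im}f^n}=\Delta_A$.
   Context: $\ker h=\{(a,a'):h(a)=h(a')\}$; for a subact $B$, $\mathcal K_B=(B\times B)\cup\Delta_A$ with $\Delta_A=\{(a,a):a\in A\}$; $\nabla_A=A\times A$; $\vee$ is the join of congruences. Noetherian: ascending chain condition on congruences. Rees artinian: descending chain condition on subacts. *)

theory Defs
  imports Main
begin

definition right_act :: "'a set \<Rightarrow> ('a \<Rightarrow> 'm::monoid_mult \<Rightarrow> 'a) \<Rightarrow> bool" where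
  "right_act A act \<longleftrightarrow>
     (\<forall>a\<in>A. \<forall>s. act a s \<in> A) \<and>
     (\<forall>a\<in>A. act a 1 = a) \<and>
     (\<forall>a\<in>A. \<forall>s t. act (act a s) t = act a (s * t))"

definition subact :: "'a set \<Rightarrow> ('a \<Rightarrow> 'm::monoid_mult \<Rightarrow> 'a) \<Rightarrow> 'a set \<Rightarrow> bool" where
  "subact A act B \<longleftrightarrow> B \<subseteq> A \<and> (\<forall>b\<in>B. \<forall>s. act b s \<in> B)"

definition act_congruence :: "'a set \<Rightarrow> ('a \<Rightarrow> 'm::monoid_mult \<Rightarrow> 'a) \<Rightarrow> ('a \<times> 'a) set \<Rightarrow> bool" where
  "act_congruence A act \<rho> \<longleftrightarrow> equiv A \<rho> \<and>
     (\<forall>a b s. (a, b) \<in> \<rho> \<longrightarrow> (act a s, act b s) \<in> \<rho>)"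

definition Delta :: "'a set \<Rightarrow> ('a \<times> 'a) set" where
  "Delta A = {(a, a) | a. a \<in> A}"

definition Nabla :: "'a set \<Rightarrow> ('a \<times> 'a) set" where
  "Nabla A = A \<times> A"

definition rees_cong :: "'a set \<Rightarrow> 'a set \<Rightarrow> ('a \<times> 'a) set" where
  "rees_cong A B = (B \<times> B) \<union> Delta A"

definition act_ker :: "'a set \<Rightarrow> ('a \<Rightarrow> 'b) \<Rightarrow> ('a \<times> 'a) set" where
  "act_ker A h = {(a, a'). a \<in> A \<and> a' \<in> A \<and> h a = h a'}"

definition cong_join :: "'a set \<Rightarrow> ('a \<Rightarrow> 'm::monoid_mult \<Rightarrow> 'a) \<Rightarrow> ('a \<times> 'a) set \<Rightarrow> ('a \<times> 'a) set \<Rightarrow> ('a \<times> 'a) set" where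
  "cong_join A act \<rho> \<sigma> = \<Inter> {\<tau>. act_congruence A act \<tau> \<and> \<rho> \<union> \<sigma> \<subseteq> \<tau>}"

definition act_endo :: "'a set \<Rightarrow> ('a \<Rightarrow> 'm::monoid_mult \<Rightarrow> 'a) \<Rightarrow> ('a \<Rightarrow> 'a) \<Rightarrow> bool" where
  "act_endo A act f \<longleftrightarrow> (\<forall>a\<in>A. f a \<in> A) \<and> (\<forall>a\<in>A. \<forall>s. f (act a s) = act (f a) s)"

definition act_noetherian :: "'a set \<Rightarrow> ('a \<Rightarrow> 'm::monoid_mult \<Rightarrow> 'a) \<Rightarrow> bool" where
  "act_noetherian A act \<longleftrightarrow>
     (\<forall>C :: nat \<Rightarrow> ('a \<times> 'a) set.
        (\<forall>i. act_congruence A act (C i)) \<and> (\<forall>i. C i \<subseteq> C (Suc i)) \<longrightarrow>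
        (\<exists>N. \<forall>i\<ge>N. C i = C N))"

definition act_rees_artinian :: "'a set \<Rightarrow> ('a \<Rightarrow> 'm::monoid_mult \<Rightarrow> 'a) \<Rightarrow> bool" where
  "act_rees_artinian A act \<longleftrightarrow>
     (\<forall>B :: nat \<Rightarrow> 'a set.
        (\<forall>i. subact A act (B i)) \<and> (\<forall>i. B (Suc i) \<subseteq> B i) \<longrightarrow>
        (\<exists>N. \<forall>i\<ge>N. B i = B N))"

end

theory Submission
  imports Defs
begin

text \<open>This is Fitting's lemma for acts. The kernels of the powers of f form an ascending chain of
  congruences and their images a descending chain of subacts, so both become stationary; fix
  g = f^n beyond both stabilisation points. Stability of the kernel, ker g^2 = ker g, makes g
  injective on Im g, so the kernel of g meets the Rees congruence of Im g only in the diagonal.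
  Stability of the image, Im g^2 = Im g, lets every a be written with g a = g (g y): thus a is
  kernel-related to g y in Im g, any two elements of Im g are Rees-related, and the join is
  everything.\<close>

lemma act_endo_funpow:
  assumes "act_endo A act f"
  shows "act_endo A act (f ^^ n)"
  using assms by (induction n) (auto simp: act_endo_def)

lemma act_congruence_act_ker:
  assumes "right_act A act" "act_endo A act g"
  shows "act_congruence A act (act_ker A g)"
  using assms unfolding act_congruence_def act_ker_def act_endo_def right_act_def equiv_def
    refl_on_def sym_def trans_def by auto

lemma subact_image:
  assumes "right_act A act" "act_endo A act g"
  shows "subact A act (g ` A)"
  unfolding subact_def
proof (intro conjI ballI allI)
  show "g ` A \<subseteq> A" using assms(2) unfolding act_endo_def by auto
  fix b s assume "b \<in> g ` A"
  then obtain x where "x \<in> A" "b = g x" by auto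
  then have "act b s = g (act x s)" "act x s \<in> A"
    using assms unfolding act_endo_def right_act_def by auto
  then show "act b s \<in> g ` A" by auto
qed

lemma act_congruence_Nabla:
  assumes "right_act A act"
  shows "act_congruence A act (Nabla A)"
  using assms unfolding Nabla_def act_congruence_def equiv_def refl_on_def sym_def trans_def
    right_act_def by blast

lemma act_ker_funpow_mono:
  fixes f :: "'a \<Rightarrow> 'a"
  shows "act_ker A (f ^^ i) \<subseteq> act_ker A (f ^^ Suc i)"
  unfolding act_ker_def by auto

lemma image_funpow_antimono:
  assumes "f ` A \<subseteq> A"
  shows "(f ^^ Suc i) ` A \<subseteq> (f ^^ i) ` A"
proof -
  have "(f ^^ Suc i) ` A = (f ^^ i) ` (f ` A)"
    by (simp only: funpow_Suc_right image_comp)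
  with assms show ?thesis by blast
qed

lemma act_noetherian_act_ker_funpow_stable:
  assumes "right_act A act" "act_noetherian A act" "act_endo A act f"
  obtains N where "\<And>i. i \<ge> N \<Longrightarrow> act_ker A (f ^^ i) = act_ker A (f ^^ N)"
proof -
  have "\<forall>i. act_congruence A act (act_ker A (f ^^ i))"
    using act_congruence_act_ker[OF assms(1) act_endo_funpow[OF assms(3)]] by blast
  moreover have "\<forall>i. act_ker A (f ^^ i) \<subseteq> act_ker A (f ^^ Suc i)"
    using act_ker_funpow_mono by blast
  ultimately have "\<exists>N. \<forall>i\<ge>N. act_ker A (f ^^ i) = act_ker A (f ^^ N)"
    by (rule assms(2)[unfolded act_noetherian_def, THEN spec, THEN mp, OF conjI])
  with that show ?thesis by blast
qed

lemma act_rees_artinian_image_funpow_stable: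
  assumes "right_act A act" "act_rees_artinian A act" "act_endo A act f"
  obtains N where "\<And>i. i \<ge> N \<Longrightarrow> (f ^^ i) ` A = (f ^^ N) ` A"
proof -
  have "\<forall>i. subact A act ((f ^^ i) ` A)"
    using subact_image[OF assms(1) act_endo_funpow[OF assms(3)]] by blast
  moreover have "f ` A \<subseteq> A" using assms(3) unfolding act_endo_def by auto
  then have "\<forall>i. (f ^^ Suc i) ` A \<subseteq> (f ^^ i) ` A"
    using image_funpow_antimono by blast
  ultimately have "\<exists>N. \<forall>i\<ge>N. (f ^^ i) ` A = (f ^^ N) ` A"
    by (rule assms(2)[unfolded act_rees_artinian_def, THEN spec, THEN mp, OF conjI])
  with that show ?thesis by blast
qed

lemma act_ker_inter_rees_cong:
  assumes "B \<subseteq> A" "inj_on g B"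
  shows "act_ker A g \<inter> rees_cong A B = Delta A"
  using assms unfolding act_ker_def rees_cong_def Delta_def inj_on_def by auto

lemma cong_join_rees_cong_eq_Nabla:
  assumes "right_act A act" "\<rho> \<subseteq> Nabla A" "B \<subseteq> A"
    and reach: "\<And>a. a \<in> A \<Longrightarrow> \<exists>b\<in>B. (a, b) \<in> \<rho>"
  shows "cong_join A act \<rho> (rees_cong A B) = Nabla A"
proof -
  have "Nabla A \<subseteq> \<tau>" if \<tau>: "act_congruence A act \<tau>" "\<rho> \<union> rees_cong A B \<subseteq> \<tau>" for \<tau>
  proof
    fix p assume "p \<in> Nabla A"
    then obtain a a' where p: "p = (a, a')" "a \<in> A" "a' \<in> A" unfolding Nabla_def by auto
    obtain b b' where "b \<in> B" "b' \<in> B" "(a, b) \<in> \<tau>" "(a', b') \<in> \<tau>" "(b, b') \<in> \<tau>"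
      using reach[OF p(2)] reach[OF p(3)] \<tau>(2) unfolding rees_cong_def by blast
    moreover have "sym \<tau>" "trans \<tau>" using \<tau>(1) unfolding act_congruence_def equiv_def by auto
    ultimately show "p \<in> \<tau>" unfolding p(1) sym_def trans_def by metis
  qed
  moreover have "rees_cong A B \<subseteq> Nabla A"
    using assms(3) unfolding rees_cong_def Delta_def Nabla_def by auto
  ultimately show ?thesis
    using act_congruence_Nabla[OF assms(1)] assms(2) unfolding cong_join_def
    by (intro equalityI Inter_lower Inter_greatest) auto
qed

lemma inj_on_image_if_act_ker_stable:
  assumes "act_ker A (g \<circ> g) \<subseteq> act_ker A g" "g ` A \<subseteq> A"
  shows "inj_on g (g ` A)"
  using assms unfolding act_ker_def inj_on_def by fastforce

lemma fitting_decomposition: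
  assumes "right_act A act" "g ` A \<subseteq> A"
    and ker_stable: "act_ker A (g \<circ> g) \<subseteq> act_ker A g"
    and image_stable: "g ` A \<subseteq> (g \<circ> g) ` A"
  shows "cong_join A act (act_ker A g) (rees_cong A (g ` A)) = Nabla A"
    and "act_ker A g \<inter> rees_cong A (g ` A) = Delta A"
proof -
  have "\<exists>b\<in>g ` A. (a, b) \<in> act_ker A g" if "a \<in> A" for a
  proof -
    obtain y where "y \<in> A" "g a = g (g y)" using image_stable \<open>a \<in> A\<close> by fastforce
    with that assms(2) show ?thesis unfolding act_ker_def by blast
  qed
  moreover have "act_ker A g \<subseteq> Nabla A" unfolding act_ker_def Nabla_def by auto
  ultimately show "cong_join A act (act_ker A g) (rees_cong A (g ` A)) = Nabla A"
    using cong_join_rees_cong_eq_Nabla[OF assms(1) _ assms(2)] by blast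
  show "act_ker A g \<inter> rees_cong A (g ` A) = Delta A"
    by (rule act_ker_inter_rees_cong[OF assms(2)])
      (rule inj_on_image_if_act_ker_stable[OF ker_stable assms(2)])
qed

theorem mainTheorem11:
  fixes A :: "'a set" and act :: "'a \<Rightarrow> 'm::monoid_mult \<Rightarrow> 'a" and f :: "'a \<Rightarrow> 'a"
  assumes "right_act A act"
    and "act_noetherian A act"
    and "act_rees_artinian A act"
    and "act_endo A act f"
  shows "\<exists>n::nat. n \<ge> 1 \<and>
           cong_join A act (act_ker A (f ^^ n)) (rees_cong A ((f ^^ n) ` A)) = Nabla A \<and>
           act_ker A (f ^^ n) \<inter> rees_cong A ((f ^^ n) ` A) = Delta A"
proof -
  obtain N1 where N1: "\<And>i. i \<ge> N1 \<Longrightarrow> act_ker A (f ^^ i) = act_ker A (f ^^ N1)"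
    using act_noetherian_act_ker_funpow_stable[OF assms(1,2,4)] by blast
  obtain N2 where N2: "\<And>i. i \<ge> N2 \<Longrightarrow> (f ^^ i) ` A = (f ^^ N2) ` A"
    using act_rees_artinian_image_funpow_stable[OF assms(1,3,4)] by blast
  define n where "n = Suc (N1 + N2)"
  have square: "f ^^ n \<circ> f ^^ n = f ^^ (n + n)" by (simp add: funpow_add)
  have "act_ker A (f ^^ n \<circ> f ^^ n) = act_ker A (f ^^ n)"
    unfolding square using N1[of n] N1[of "n + n"] n_def by simp
  moreover have "(f ^^ n \<circ> f ^^ n) ` A = (f ^^ n) ` A"
    unfolding square using N2[of n] N2[of "n + n"] n_def by simp
  moreover have "(f ^^ n) ` A \<subseteq> A"
    using act_endo_funpow[OF assms(4)] unfolding act_endo_def by auto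
  ultimately have "cong_join A act (act_ker A (f ^^ n)) (rees_cong A ((f ^^ n) ` A)) = Nabla A"
    and "act_ker A (f ^^ n) \<inter> rees_cong A ((f ^^ n) ` A) = Delta A"
    using fitting_decomposition[OF assms(1), of "f ^^ n"] by simp_all
  moreover have "n \<ge> 1" unfolding n_def by simp
  ultimately show ?thesis by blast
qed

end
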